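(* Let $k\ge r\ge 3$ and $p,t\ge0$ be integers, let $N_2\ge 0$, and let $\pi\in\mathbb{C}_{<}(k,r|p,t)$ be a partition with exactly $N_2$ parts marked $2$ in $GG(\pi)$. Then $p+t\ge N_2$.
   Context: A partition $\pi=(\pi_1,\dots,\pi_\ell)$ is a finite non-increasing sequence of positive integers; "$a$ occurs in $\pi$" means $a=\pi_i$ for some $i$. Göllnitz–Gordon marking: $GG(\pi)$ assigns a positive integer (mark) to each part, processing the parts from smallest to largest ($\pi_\ell,\dots,\pi_1$); $\pi_i$ receives the smallest positive integer different from the marks of all parts $\pi_g$ with $g>i$ and $\pi_i-\pi_g\le 2$, where $\pi_i-\pi_g<2$ is required when $\pi_i$ is odd. An "$r$-marked part $a$" is a part equal to $a$ with mark $r$. $N_i(\pi)$ is the number of parts with mark $i$; $\pi^{(i)}_1\ge\dots\ge\pi^{(i)}_{N_i(\pi)}$ are the parts with mark $i$, with $\pi^{(i)}_0=+\infty$, $\pi^{(i)}_{N_i(\pi)+1}=-\infty$. $\mathbb{C}(k,r)$: partitions with (i) no odd part repeated; (ii) $\pi_i\ge\pi_{i+k-1}+2$ for $1\le i\le\ell-k+1$, strict if $\pi_i$ even; (iii) at most $r-1$ parts $\le 2$. Starting types: for $\pi\in\mathbb{C}(k,r)$ with $N_2=N_2(\pi)\ge1$, let $l$ be the largest integer in $\{0,\dots,N_2\}$ such that no odd part of $\pi$ is $\ge\pi^{(2)}_l$; for $l<i\le N_2$, $\pi^{(2)}_i$ has type $s_{-1}$. For $b=1,\dots,l$ in increasing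 order, type and auxiliary $\sigma_b$: for $b=1$: Case 1: 1-marked part $\pi^{(2)}_1-1$ exists and $\pi^{(2)}_1+2$ does not occur: type $s_0$, $\sigma_1=\pi^{(2)}_1-1$; Case 2: 1-marked $\pi^{(2)}_1-2$ exists and $\pi^{(2)}_1+2$ does not occur: type $s_1$, $\sigma_1=\pi^{(2)}_1-2$; Case 3: 1-marked $\pi^{(2)}_1+2$ exists: type $s_2$, $\sigma_1=\pi^{(2)}_1+2$; Case 4: 1-marked $\pi^{(2)}_1$ exists: type $s_3$, $\sigma_1=\pi^{(2)}_1$. For $2\le b\le l$: Case 1: 1-marked $\pi^{(2)}_b-1$ exists and, if a 1-marked $\pi^{(2)}_b+2$ exists, $\sigma_{b-1}=\pi^{(2)}_b+2$: type $s_0$, $\sigma_b=\pi^{(2)}_b-1$; Case 2: same with $\pi^{(2)}_b-2$: type $s_1$, $\sigma_b=\pi^{(2)}_b-2$; Case 3: 1-marked $\pi^{(2)}_b+2$ exists and $\sigma_{b-1}\ne\pi^{(2)}_b+2$: type $s_2$, $\sigma_b=\pi^{(2)}_b+2$; Case 4: 1-marked $\pi^{(2)}_b$ exists: type $s_3$, $\sigma_b=\pi^{(2)}_b$. $\mathbb{C}_{<}(k,r|p,t)$: the set of $\pi\in\mathbb{C}(k,r)$ such that (1) no odd part is $\ge 2t+1$; (2) $\pi^{(2)}_{p+1}<2t+1<\pi^{(2)}_p$ (in particular $p\le N_2(\pi)$); (3) if $\pi^{(2)}_p=2t+2$ then it is of starting type $s_2$ or $s_3$; (4) if $\pi^{(2)}_{p+1}=2t$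 then it is of starting type $s_0$ or $s_1$. *)

theory Defs
  imports Main "HOL-Library.Extended_Real"
begin

(* A partition is a list xs = [pi_1, ..., pi_l] (0-based: pi_i = xs ! (i-1)),
   non-increasing, with positive entries. *)
definition is_partition :: "nat list \<Rightarrow> bool" where
  "is_partition xs \<longleftrightarrow> sorted_wrt (\<ge>) xs \<and> (\<forall>a\<in>set xs. 0 < a)"

(* The parts are processed from the smallest to
   the largest; "done" is the list of already processed (part, mark) pairs. *)
definition gg_new_mark :: "(nat \<times> nat) list \<Rightarrow> nat \<Rightarrow> nat" where
  "gg_new_mark dn a = (LEAST m. 0 < m \<and>
      m \<notin> {mk. \<exists>b. (b, mk) \<in> set dn \<and> int a - int b \<le> 2 \<and>
                         (odd a \<longrightarrow> int a - int b < 2)})"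

definition gg_asc :: "nat list \<Rightarrow> (nat \<times> nat) list" where
  "gg_asc xs = foldl (\<lambda>dn a. dn @ [(a, gg_new_mark dn a)]) [] (rev xs)"

(* GG xs ! j is the mark of the part xs ! j *)
definition GG :: "nat list \<Rightarrow> nat list" where
  "GG xs = rev (map snd (gg_asc xs))"

definition marked_parts :: "nat list \<Rightarrow> nat \<Rightarrow> nat list" where
  "marked_parts xs i = [xs ! j. j \<leftarrow> [0..<length xs], GG xs ! j = i]"

definition Nmark :: "nat list \<Rightarrow> nat \<Rightarrow> nat" where
  "Nmark xs i = length (marked_parts xs i)"

definition mpart :: "nat list \<Rightarrow> nat \<Rightarrow> nat \<Rightarrow> ereal" where
  "mpart xs i b = (if b = 0 then \<infinity>
                   else if b \<le> Nmark xs i then ereal (real (marked_parts xs i ! (b - 1)))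
                   else -\<infinity>)"

definition marked_exists :: "nat list \<Rightarrow> nat \<Rightarrow> nat \<Rightarrow> bool" where
  "marked_exists xs r a \<longleftrightarrow> (\<exists>j<length xs. xs ! j = a \<and> GG xs ! j = r)"

definition Cset :: "nat \<Rightarrow> nat \<Rightarrow> nat list set" where
  "Cset k r = {xs. is_partition xs
     \<and> (\<forall>a. odd a \<longrightarrow> count_list xs a \<le> 1)
     \<and> (\<forall>i. i + k - 1 < length xs \<longrightarrow>
            xs ! i \<ge> xs ! (i + k - 1) + 2 \<and>
            (even (xs ! i) \<longrightarrow> xs ! i > xs ! (i + k - 1) + 2))
     \<and> length (filter (\<lambda>a. a \<le> 2) xs) \<le> r - 1}"

datatype stype = Sm1 | S0 | S1 | S2 | S3

(* starting type and auxiliary sigma_b of pi^(2)_b, for 1 <= b <= l;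
   the first applicable case (in the order Case 1..4) is taken; None if no case applies *)
fun st_aux :: "nat list \<Rightarrow> nat \<Rightarrow> (stype \<times> nat) option" where
  "st_aux xs 0 = None"
| "st_aux xs (Suc b) =
     (let a = marked_parts xs 2 ! b; one = marked_exists xs 1 in
      if b = 0 then
        (if one (a - 1) \<and> a + 2 \<notin> set xs then Some (S0, a - 1)
         else if one (a - 2) \<and> a + 2 \<notin> set xs then Some (S1, a - 2)
         else if one (a + 2) then Some (S2, a + 2)
         else if one a then Some (S3, a)
         else None)
      else
        (let prev = map_option snd (st_aux xs b) in
         if one (a - 1) \<and> (one (a + 2) \<longrightarrow> prev = Some (a + 2)) then Some (S0, a - 1)
         else if one (a - 2) \<and> (one (a + 2) \<longrightarrow> prev = Some (a + 2)) then Some (S1, a - 2)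
         else if one (a + 2) \<and> prev \<noteq> Some (a + 2) then Some (S2, a + 2)
         else if one a then Some (S3, a)
         else None))"

definition lstart :: "nat list \<Rightarrow> nat" where
  "lstart xs = Max {l. l \<le> Nmark xs 2 \<and>
                        (\<forall>a\<in>set xs. odd a \<longrightarrow> ereal (real a) < mpart xs 2 l)}"

definition start_type :: "nat list \<Rightarrow> nat \<Rightarrow> stype option" where
  "start_type xs b =
     (if 1 \<le> b \<and> b \<le> lstart xs then map_option fst (st_aux xs b)
      else if lstart xs < b \<and> b \<le> Nmark xs 2 then Some Sm1
      else None)"

definition Cless :: "nat \<Rightarrow> nat \<Rightarrow> nat \<Rightarrow> nat \<Rightarrow> nat list set" where
  "Cless k r p t = {xs. xs \<in> Cset k r
     \<and> (\<forall>a\<in>set xs. odd a \<longrightarrow> a < 2 * t + 1)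
     \<and> mpart xs 2 (p + 1) < ereal (real (2 * t + 1))
     \<and> ereal (real (2 * t + 1)) < mpart xs 2 p
     \<and> (mpart xs 2 p = ereal (real (2 * t + 2)) \<longrightarrow>
           start_type xs p \<in> {Some S2, Some S3})
     \<and> (mpart xs 2 (p + 1) = ereal (real (2 * t)) \<longrightarrow>
           start_type xs (p + 1) \<in> {Some S0, Some S1})}"

end

theory Submission
  imports Defs
begin

(* Two parts with the same GG mark differ by at least 2, since a part never shares its mark
   with an already marked part below it by at most 1.  Hence the 2-marked parts are positive
   and spaced at least 2 apart; those from pi^(2)_(p+1) on lie below 2t+1, so there are at
   most t of them. *)

lemma Least_pos_notin:
  fixes S :: "nat set"
  assumes "finite S"
  shows "(LEAST m. 0 < m \<and> m \<notin> S) \<notin> S"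
proof -
  obtain m' where "m' \<notin> insert 0 S"
    using ex_new_if_finite[OF infinite_UNIV_nat] assms by blast
  then have "0 < m' \<and> m' \<notin> S"
    by simp
  then show ?thesis
    by (rule LeastI2) simp
qed

lemma gg_new_mark_neq:
  assumes "(b, m) \<in> set dn" and "int a - int b \<le> 1"
  shows "gg_new_mark dn a \<noteq> m"
proof -
  let ?S = "{mk. \<exists>b. (b, mk) \<in> set dn \<and> int a - int b \<le> 2 \<and>
                    (odd a \<longrightarrow> int a - int b < 2)}"
  have "?S \<subseteq> snd ` set dn"
    by force
  then have "finite ?S"
    by (rule finite_subset) simp
  then have "gg_new_mark dn a \<notin> ?S"
    unfolding gg_new_mark_def by (rule Least_pos_notin)
  moreover have "m \<in> ?S"
    using assms by auto
  ultimately show ?thesis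
    by blast
qed

lemma gg_asc_Cons: "gg_asc (x # xs) = gg_asc xs @ [(x, gg_new_mark (gg_asc xs) x)]"
  by (simp add: gg_asc_def)

lemma GG_Cons: "GG (x # xs) = gg_new_mark (gg_asc xs) x # GG xs"
  by (simp add: GG_def gg_asc_Cons)

lemma length_GG [simp]: "length (GG xs) = length xs"
  by (induction xs) (simp_all add: GG_def gg_asc_def GG_Cons)

lemma gg_asc_eq_rev_zip: "gg_asc xs = rev (zip xs (GG xs))"
  by (induction xs) (simp_all add: gg_asc_Cons GG_Cons gg_asc_def)

lemma GG_nth_neq:
  assumes "i < j" and "j < length xs" and "int (xs ! i) - int (xs ! j) \<le> 1"
  shows "GG xs ! i \<noteq> GG xs ! j"
  using assms
proof (induction xs arbitrary: i j)
  case Nil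
  then show ?case by simp
next
  case (Cons x xs)
  then obtain j' where j: "j = Suc j'" and "j' < length xs"
    by (cases j) auto
  show ?case
  proof (cases i)
    case 0
    have "(xs ! j', GG xs ! j') \<in> set (gg_asc xs)"
      using \<open>j' < length xs\<close> by (auto simp: gg_asc_eq_rev_zip in_set_zip)
    then show ?thesis
      using 0 j Cons.prems(3) by (simp add: GG_Cons gg_new_mark_neq)
  next
    case (Suc i')
    then show ?thesis
      using Cons j by (simp add: GG_Cons)
  qed
qed

lemma GG_nth_eq_gap:
  assumes "is_partition xs" and "i < j" and "j < length xs" and "GG xs ! i = GG xs ! j"
  shows "xs ! j + 2 \<le> xs ! i"
proof -
  have "xs ! j \<le> xs ! i"
    using assms(1-3) by (simp add: is_partition_def sorted_wrt_iff_nth_less)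
  then show ?thesis
    using GG_nth_neq[OF assms(2,3)] assms(4) by linarith
qed

lemma marked_parts_gap:
  assumes "is_partition xs"
  shows "sorted_wrt (\<lambda>a b. b + 2 \<le> a) (marked_parts xs i)"
proof -
  let ?js = "filter (\<lambda>j. GG xs ! j = i) [0..<length xs]"
  have "concat (map (\<lambda>j. if GG xs ! j = i then [xs ! j] else []) js)
        = map ((!) xs) (filter (\<lambda>j. GG xs ! j = i) js)" for js
    by (induction js) auto
  then have "marked_parts xs i = map ((!) xs) ?js"
    by (simp add: marked_parts_def)
  moreover have "sorted_wrt (\<lambda>j j'. xs ! j' + 2 \<le> xs ! j) ?js"
  proof (rule sorted_wrt_mono_rel[OF _ sorted_wrt_filter[OF sorted_wrt_upt]])
    fix j j'
    assume "j \<in> set ?js" "j' \<in> set ?js" "j < j'"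
    then show "xs ! j' + 2 \<le> xs ! j"
      using GG_nth_eq_gap[OF assms] by simp
  qed
  ultimately show ?thesis
    by (simp add: sorted_wrt_map)
qed

lemma marked_parts_pos:
  assumes "is_partition xs" and "a \<in> set (marked_parts xs i)"
  shows "0 < a"
  using assms by (auto simp: marked_parts_def is_partition_def)

lemma gap2_list_length_le:
  fixes L :: "nat list"
  assumes "sorted_wrt (\<lambda>a b. b + 2 \<le> a) L" and "\<forall>a\<in>set L. 0 < a \<and> a \<le> 2 * t"
  shows "length L \<le> t"
  using assms
proof (induction L arbitrary: t)
  case Nil
  then show ?case by simp
next
  case (Cons a L)
  then have "length L \<le> t - 1"
    by (intro Cons.IH) auto
  moreover have "0 < t"
    using Cons.prems(2) by auto
  ultimately show ?case
    by simp
qed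

lemma gap2_list_length_le_nth:
  fixes L :: "nat list"
  assumes "sorted_wrt (\<lambda>a b. b + 2 \<le> a) L" and "\<forall>a\<in>set L. 0 < a"
    and "p < length L \<Longrightarrow> L ! p \<le> 2 * t"
  shows "length L \<le> p + t"
proof (cases "p < length L")
  case True
  have sorted_drop: "sorted_wrt (\<lambda>a b. b + 2 \<le> a) (L ! p # drop (Suc p) L)"
    using sorted_wrt_drop[OF assms(1), of p] by (simp add: Cons_nth_drop_Suc[OF True])
  have "\<forall>a\<in>set (drop p L). 0 < a \<and> a \<le> 2 * t"
    using sorted_drop assms(2,3) True
    by (auto simp: Cons_nth_drop_Suc[OF True, symmetric] dest: in_set_dropD)
  then have "length (drop p L) \<le> t"
    using gap2_list_length_le sorted_wrt_drop[OF assms(1)] by blast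
  then show ?thesis
    by simp
qed simp

theorem proposition2p3:
  fixes k r p t N2 :: nat and xs :: "nat list"
  assumes "3 \<le> r" and "r \<le> k"
    and "xs \<in> Cless k r p t"
    and "Nmark xs 2 = N2"
  shows "N2 \<le> p + t"
proof -
  let ?L = "marked_parts xs 2"
  have part: "is_partition xs"
    using assms(3) by (simp add: Cless_def Cset_def)
  have "mpart xs 2 (p + 1) < ereal (real (2 * t + 1))"
    using assms(3) by (simp add: Cless_def)
  then have "p < length ?L \<Longrightarrow> ?L ! p \<le> 2 * t"
    by (simp add: mpart_def Nmark_def)
  then have "length ?L \<le> p + t"
    using gap2_list_length_le_nth marked_parts_gap[OF part] marked_parts_pos[OF part] by blast
  then show ?thesis
    using assms(4) by (simp add: Nmark_def)
qed

end
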